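(* Let $C$ be a compact Hausdorff space, and let $X$ be a topological space which is written in two ways as a topological coproduct $X=\bigsqcup_{i\in\mathbb{N}}C_i=\bigsqcup_{i\in\mathbb{N}}C'_i$ where for each $i$ there are homeomorphisms $\eta_i:C\to C_i$ and $\eta'_i:C\to C'_i$. Let $\pi,\pi':X\to\mathbb{N}$ be given by $\pi(C_i)=\{i\}$ and $\pi'(C'_i)=\{i\}$, and let $\varepsilon=\{e:\exists f\in\zeta,\ e\subseteq(\pi\times\pi)^{-1}(f)\}$ and $\varepsilon'=\{e:\exists f\in\zeta,\ e\subseteq(\pi'\times\pi')^{-1}(f)\}$, where $\zeta=\{f\subseteq\mathbb{N}\times\mathbb{N}: f\setminus\Delta\mathbb{N}\text{ finite}\}$. Let $Z$ be a compact metrizable space. If $X+_fZ\in\mathrm{Pers}(\varepsilon)$ and $X+_gZ\in\mathrm{Pers}(\varepsilon')$, then $X+_fZ$ and $X+_gZ$ are homeomorphic.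
   Context: Artin–Wraith glueing: $\mathrm{Closed}(A)$ is the set of closed subsets of $A$; $f:\mathrm{Closed}(A)\to\mathrm{Closed}(B)$ is admissible if $f(\emptyset)=\emptyset$ and $f$ preserves finite unions; $A+_fB$ is $A\sqcup B$ with closed sets the $D$ with $D\cap A$ closed in $A$, $D\cap B$ closed in $B$, $f(D\cap A)\subseteq D$. $\mathrm{Comp}(X)$: compact spaces $X+_fW$ with $W$ compact Hausdorff, morphisms continuous maps that are the identity on $X$. For a Hausdorff compactification $X+_fW$ of $X$ ($X$ dense), $e\subseteq X\times X$ is perspective if $\mathrm{Cl}_{(X+_fW)^2}(e)\cap((X+_fW)^2-X^2)\subseteq\{(p,p):p\in W\}$; $\varepsilon_f$ is the set of perspective sets; for a coarse structure $\varepsilon$, the compactification is perspective if $\varepsilon\subseteq\varepsilon_f$; $\mathrm{Pers}(\varepsilon)$ is the full subcategory of $\mathrm{Comp}(X)$ of perspective compactifications. The homeomorphism in the conclusion need not be the identity on $X$. *)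

theory Defs
  imports "HOL-Analysis.Analysis"
begin

definition admissible :: "'a topology \<Rightarrow> 'b topology \<Rightarrow> ('a set \<Rightarrow> 'b set) \<Rightarrow> bool" where
  "admissible A B f \<longleftrightarrow>
     (\<forall>D. closedin A D \<longrightarrow> closedin B (f D)) \<and> f {} = {} \<and>
     (\<forall>D E. closedin A D \<longrightarrow> closedin A E \<longrightarrow> f (D \<union> E) = f D \<union> f E)"

definition glue_carrier :: "'a topology \<Rightarrow> 'b topology \<Rightarrow> ('a + 'b) set" where
  "glue_carrier A B = Inl ` topspace A \<union> Inr ` topspace B"

text \<open>Closed sets of the Artin-Wraith glueing A +_f B.\<close>
definition glue_closed :: "'a topology \<Rightarrow> 'b topology \<Rightarrow> ('a set \<Rightarrow> 'b set) \<Rightarrow> ('a + 'b) set \<Rightarrow> bool" where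
  "glue_closed A B f D \<longleftrightarrow>
     D \<subseteq> glue_carrier A B \<and> closedin A (Inl -` D) \<and> closedin B (Inr -` D) \<and>
     Inr ` f (Inl -` D) \<subseteq> D"

definition glue :: "'a topology \<Rightarrow> 'b topology \<Rightarrow> ('a set \<Rightarrow> 'b set) \<Rightarrow> ('a + 'b) topology" where
  "glue A B f = topology (\<lambda>U. U \<subseteq> glue_carrier A B \<and> glue_closed A B f (glue_carrier A B - U))"

definition perspective :: "'a topology \<Rightarrow> 'b topology \<Rightarrow> ('a set \<Rightarrow> 'b set) \<Rightarrow> ('a \<times> 'a) set \<Rightarrow> bool" where
  "perspective X W f e \<longleftrightarrow>
     e \<subseteq> topspace X \<times> topspace X \<and>
     (prod_topology (glue X W f) (glue X W f) closure_of ((\<lambda>(x,y). (Inl x, Inl y)) ` e))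
        - (Inl ` topspace X \<times> Inl ` topspace X)
       \<subseteq> {(Inr p, Inr p) | p. p \<in> topspace W}"

definition hausdorff_compactification :: "'a topology \<Rightarrow> 'b topology \<Rightarrow> ('a set \<Rightarrow> 'b set) \<Rightarrow> bool" where
  "hausdorff_compactification X W f \<longleftrightarrow>
     admissible X W f \<and> compact_space W \<and> Hausdorff_space W \<and>
     compact_space (glue X W f) \<and> Hausdorff_space (glue X W f) \<and>
     (glue X W f) closure_of (Inl ` topspace X) = topspace (glue X W f)"

definition in_Pers :: "('a \<times> 'a) set set \<Rightarrow> 'a topology \<Rightarrow> 'b topology \<Rightarrow> ('a set \<Rightarrow> 'b set) \<Rightarrow> bool" where
  "in_Pers eps X W f \<longleftrightarrow> hausdorff_compactification X W f \<and> (\<forall>e\<in>eps. perspective X W f e)"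

definition zeta :: "(nat \<times> nat) set set" where
  "zeta = {F. finite (F - Id)}"

text \<open>The coarse structure induced by the decomposition C of X (pi x = the i with x in C i).\<close>
definition decomp_coarse :: "'a topology \<Rightarrow> (nat \<Rightarrow> 'a set) \<Rightarrow> ('a \<times> 'a) set set" where
  "decomp_coarse X C =
     {e. \<exists>F\<in>zeta. e \<subseteq> {(x,y). x \<in> topspace X \<and> y \<in> topspace X \<and>
                              ((THE i. x \<in> C i), (THE i. y \<in> C i)) \<in> F}}"

definition is_coproduct_decomp :: "'a topology \<Rightarrow> (nat \<Rightarrow> 'a set) \<Rightarrow> bool" where
  "is_coproduct_decomp X C \<longleftrightarrow>
     (\<forall>i. openin X (C i)) \<and> (\<Union>i. C i) = topspace X \<and>
     (\<forall>i j. i \<noteq> j \<longrightarrow> C i \<inter> C j = {})"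

end

(* Each block C_i is compact and open in Y = X +_f Z, and perspectivity of the relation
   "x and y lie in the same block" forces the blocks to shrink towards the remainder: every block
   meeting a small enough neighbourhood of a point p of Z lies in any prescribed neighbourhood of p.
   Fixing a metric on Z, this lets one attach to every block i a centre r i in Z such that, up to
   finitely many exceptions, block i is close to p exactly when r i is close to p; by density the
   centres accumulate at every point of Z.  Doing this for both compactifications, a back-and-forth
   argument produces a permutation sigma of the indices with d (r i) (r' (sigma i)) -> 0.  Mapping
   each C_i onto C'_(sigma i) through the copies of C and fixing Z gives a continuous bijection
   X +_f Z -> X +_g Z, a homeomorphism because both spaces are compact Hausdorff. *)

theory Submission
  imports Defs
begin

section \<open>The glued topology\<close>

lemma vimage_sum_image:
  "Inl -` Inl ` S = S" "Inl -` Inr ` T = {}" "Inr -` Inl ` S = {}" "Inr -` Inr ` T = T"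
  by auto

lemma admissible_mono:
  assumes "admissible A B f" "closedin A D" "closedin A E" "D \<subseteq> E"
  shows "f D \<subseteq> f E"
proof -
  have "f E = f (D \<union> E)" using assms(4) by (simp add: Un_absorb1)
  also have "\<dots> = f D \<union> f E" using assms unfolding admissible_def by blast
  finally show ?thesis by blast
qed

lemma admissible_subset_topspace:
  assumes "admissible A B f" "closedin A S"
  shows "f S \<subseteq> topspace B"
  using assms unfolding admissible_def by (meson closedin_subset)

lemma glue_closed_Un:
  assumes f: "admissible A B f" and D: "glue_closed A B f D" and E: "glue_closed A B f E"
  shows "glue_closed A B f (D \<union> E)"
proof -
  have "f (Inl -` D \<union> Inl -` E) = f (Inl -` D) \<union> f (Inl -` E)"
    using f D E by (simp add: admissible_def glue_closed_def)
  then show ?thesis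
    using D E unfolding glue_closed_def by (auto simp: vimage_Un)
qed

lemma glue_closed_Inter:
  assumes f: "admissible A B f" and \<D>: "\<And>D. D \<in> \<D> \<Longrightarrow> glue_closed A B f D"
  shows "glue_closed A B f (glue_carrier A B \<inter> \<Inter>\<D>)"
proof (cases "\<D> = {}")
  case True
  then show ?thesis
    using admissible_subset_topspace[OF f closedin_topspace]
    by (auto simp: glue_closed_def glue_carrier_def vimage_Un vimage_sum_image)
next
  case False
  let ?L = "\<Inter>D\<in>\<D>. Inl -` D"
  have L: "Inl -` (glue_carrier A B \<inter> \<Inter>\<D>) = ?L"
    and R: "Inr -` (glue_carrier A B \<inter> \<Inter>\<D>) = (\<Inter>D\<in>\<D>. Inr -` D)"
    using False \<D> unfolding glue_closed_def by blast+
  have closed_L: "closedin A ?L"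
    using False \<D> by (intro closedin_Inter) (auto simp: glue_closed_def)
  have "Inr ` f ?L \<subseteq> D" if "D \<in> \<D>" for D
  proof -
    have "f ?L \<subseteq> f (Inl -` D)"
      using that \<D> closed_L by (intro admissible_mono[OF f]) (auto simp: glue_closed_def)
    then show ?thesis using \<D>[OF that] by (auto simp: glue_closed_def)
  qed
  moreover have "Inr ` f ?L \<subseteq> glue_carrier A B"
    using admissible_subset_topspace[OF f closed_L] by (auto simp: glue_carrier_def)
  moreover have "closedin B (\<Inter>D\<in>\<D>. Inr -` D)"
    using False \<D> by (intro closedin_Inter) (auto simp: glue_closed_def)
  ultimately show ?thesis using L R closed_L by (auto simp: glue_closed_def)
qed

lemma istopology_glue:
  assumes "admissible A B f"
  shows "istopology (\<lambda>U. U \<subseteq> glue_carrier A B \<and> glue_closed A B f (glue_carrier A B - U))"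
  unfolding istopology_def
proof (rule conjI; intro allI impI)
  let ?c = "glue_carrier A B"
  fix S T
  assume S: "S \<subseteq> ?c \<and> glue_closed A B f (?c - S)" and T: "T \<subseteq> ?c \<and> glue_closed A B f (?c - T)"
  have "glue_closed A B f ((?c - S) \<union> (?c - T))"
    using S T glue_closed_Un[OF assms] by blast
  moreover have "?c - (S \<inter> T) = (?c - S) \<union> (?c - T)" by blast
  ultimately show "S \<inter> T \<subseteq> ?c \<and> glue_closed A B f (?c - S \<inter> T)"
    using S by auto
next
  let ?c = "glue_carrier A B"
  fix \<K> assume \<K>: "\<forall>S\<in>\<K>. S \<subseteq> ?c \<and> glue_closed A B f (?c - S)"
  have "glue_closed A B f (?c \<inter> \<Inter>((\<lambda>S. ?c - S) ` \<K>))"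
    using \<K> glue_closed_Inter[OF assms, of "(\<lambda>S. ?c - S) ` \<K>"] by blast
  moreover have "?c - \<Union>\<K> = ?c \<inter> \<Inter>((\<lambda>S. ?c - S) ` \<K>)" by blast
  ultimately show "\<Union>\<K> \<subseteq> ?c \<and> glue_closed A B f (?c - \<Union>\<K>)"
    using \<K> by auto
qed

lemma openin_glue:
  assumes "admissible A B f"
  shows "openin (glue A B f) U \<longleftrightarrow> U \<subseteq> glue_carrier A B \<and> glue_closed A B f (glue_carrier A B - U)"
  unfolding glue_def using istopology_glue[OF assms] by simp

lemma topspace_glue:
  assumes "admissible A B f"
  shows "topspace (glue A B f) = glue_carrier A B"
proof (rule subset_antisym)
  show "topspace (glue A B f) \<subseteq> glue_carrier A B"
    using openin_topspace[of "glue A B f"] unfolding openin_glue[OF assms] by (rule conjunct1)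
  have "glue_closed A B f {}"
    using assms by (simp add: glue_closed_def admissible_def)
  then have "openin (glue A B f) (glue_carrier A B)"
    by (simp add: openin_glue[OF assms])
  then show "glue_carrier A B \<subseteq> topspace (glue A B f)"
    by (rule openin_subset)
qed

lemma closedin_glue:
  assumes "admissible A B f"
  shows "closedin (glue A B f) D \<longleftrightarrow> glue_closed A B f D"
proof (cases "D \<subseteq> glue_carrier A B")
  case True
  then have "glue_carrier A B - (glue_carrier A B - D) = D" by blast
  then show ?thesis
    unfolding closedin_def topspace_glue[OF assms] openin_glue[OF assms] using True by auto
next
  case False
  then show ?thesis
    by (auto simp: glue_closed_def closedin_def topspace_glue[OF assms])
qed

lemma openin_glue_Inl:
  assumes f: "admissible A B f" and U: "openin A U"
  shows "openin (glue A B f) (Inl ` U)"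
proof -
  have closed: "closedin A (topspace A - U)" using U by blast
  have "glue_carrier A B - Inl ` U = Inl ` (topspace A - U) \<union> Inr ` topspace B"
    using openin_subset[OF U] by (auto simp: glue_carrier_def)
  moreover have "glue_closed A B f (Inl ` (topspace A - U) \<union> Inr ` topspace B)"
    using closed admissible_subset_topspace[OF f closed]
    by (auto simp: glue_closed_def glue_carrier_def vimage_Un vimage_sum_image)
  ultimately show ?thesis
    using openin_subset[OF U] unfolding openin_glue[OF f] by (auto simp: glue_carrier_def)
qed

lemma closedin_glue_Inr:
  assumes f: "admissible A B f" and S: "closedin B S"
  shows "closedin (glue A B f) (Inr ` S)"
proof -
  have "Inr ` S \<subseteq> glue_carrier A B"
    using closedin_subset[OF S] by (auto simp: glue_carrier_def)
  moreover have "f {} = {}" using f by (simp add: admissible_def)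
  ultimately show ?thesis
    using S by (simp add: closedin_glue[OF f] glue_closed_def vimage_sum_image)
qed

lemma continuous_map_glue_Inl:
  assumes "admissible A B f"
  shows "continuous_map A (glue A B f) Inl"
  unfolding continuous_map_def
proof (intro conjI allI impI)
  show "Inl \<in> topspace A \<rightarrow> topspace (glue A B f)"
    by (auto simp: topspace_glue[OF assms] glue_carrier_def)
  fix V assume "openin (glue A B f) V"
  then have "closedin A (Inl -` (glue_carrier A B - V))"
    unfolding openin_glue[OF assms] glue_closed_def by auto
  moreover have "{x \<in> topspace A. Inl x \<in> V} = topspace A - Inl -` (glue_carrier A B - V)"
    by (auto simp: glue_carrier_def)
  ultimately show "openin A {x \<in> topspace A. Inl x \<in> V}" by auto
qed

lemma continuous_map_glue_Inr:
  assumes "admissible A B f"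
  shows "continuous_map B (glue A B f) Inr"
  unfolding continuous_map_def
proof (intro conjI allI impI)
  show "Inr \<in> topspace B \<rightarrow> topspace (glue A B f)"
    by (auto simp: topspace_glue[OF assms] glue_carrier_def)
  fix V assume "openin (glue A B f) V"
  then have "closedin B (Inr -` (glue_carrier A B - V))"
    unfolding openin_glue[OF assms] glue_closed_def by auto
  moreover have "{x \<in> topspace B. Inr x \<in> V} = topspace B - Inr -` (glue_carrier A B - V)"
    by (auto simp: glue_carrier_def)
  ultimately show "openin B {x \<in> topspace B. Inr x \<in> V}" by auto
qed

section \<open>Perspectivity and the blocks\<close>

lemma is_coproduct_decompD:
  assumes "is_coproduct_decomp X C"
  shows "openin X (C i)" "C i \<subseteq> topspace X" "(\<Union>i. C i) = topspace X"
    and "x \<in> topspace X \<Longrightarrow> \<exists>i. x \<in> C i"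
    and "x \<in> C i \<Longrightarrow> x \<in> C j \<Longrightarrow> i = j"
proof -
  show "openin X (C i)" "(\<Union>i. C i) = topspace X"
    using assms unfolding is_coproduct_decomp_def by simp_all
  then show "C i \<subseteq> topspace X" "x \<in> topspace X \<Longrightarrow> \<exists>i. x \<in> C i" by auto
  show "i = j" if "x \<in> C i" "x \<in> C j"
    using assms that unfolding is_coproduct_decomp_def by (metis disjoint_iff)
qed

definition same_block :: "'a topology \<Rightarrow> (nat \<Rightarrow> 'a set) \<Rightarrow> ('a \<times> 'a) set" where
  "same_block X C = {(x,y). x \<in> topspace X \<and> y \<in> topspace X \<and> (\<exists>i. x \<in> C i \<and> y \<in> C i)}"

lemma same_block_in_decomp_coarse:
  assumes "is_coproduct_decomp X C"
  shows "same_block X C \<in> decomp_coarse X C"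
proof -
  have index: "(THE i. x \<in> C i) = j" if "x \<in> C j" for x j
    using that is_coproduct_decompD(5)[OF assms] by blast
  have "same_block X C \<subseteq>
      {(x,y). x \<in> topspace X \<and> y \<in> topspace X \<and> ((THE i. x \<in> C i), (THE i. y \<in> C i)) \<in> Id}"
    unfolding same_block_def using index by auto
  moreover have "Id \<in> zeta" by (simp add: zeta_def)
  ultimately show ?thesis unfolding decomp_coarse_def by blast
qed

lemma perspective_same_block_shrinks:
  fixes A :: "'a topology" and B :: "'b topology"
  assumes f: "admissible A B f" and compact: "compact_space (glue A B f)"
    and C: "\<And>i. C i \<subseteq> topspace A"
    and persp: "perspective A B f (same_block A C)"
    and p: "p \<in> topspace B" and V: "openin (glue A B f) V" "Inr p \<in> V"
  obtains W where "openin (glue A B f) W" "Inr p \<in> W" "\<And>i. Inl ` C i \<inter> W \<noteq> {} \<Longrightarrow> Inl ` C i \<subseteq> V"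
proof -
  let ?Y = "glue A B f"
  let ?P = "(\<lambda>(x,y). (Inl x, Inl y)) ` same_block A C :: (('a + 'b) \<times> ('a + 'b)) set"
  let ?S = "topspace ?Y - V"
  let ?O = "topspace (prod_topology ?Y ?Y) - prod_topology ?Y ?Y closure_of ?P"
  have pY: "Inr p \<in> topspace ?Y"
    using p by (simp add: topspace_glue[OF f] glue_carrier_def)
  have "(Inr p, q) \<notin> prod_topology ?Y ?Y closure_of ?P" if q: "q \<in> ?S" for q
  proof
    assume "(Inr p, q) \<in> prod_topology ?Y ?Y closure_of ?P"
    then have "(Inr p, q) \<in> {(Inr z, Inr z) | z. z \<in> topspace B}"
      using persp unfolding perspective_def by blast
    then show False using q V(2) by auto
  qed
  then have "{Inr p} \<times> ?S \<subseteq> ?O" using pY by auto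
  moreover have "compactin ?Y ?S"
    using V(1) compact by (intro closedin_compact_space) auto
  \<comment> \<open>tube lemma: thicken \<open>Inr p\<close> to \<open>W\<close> with \<open>W \<times> ?S\<close> disjoint from the block relation\<close>
  ultimately obtain W Q where W: "openin ?Y W" "Inr p \<in> W" "?S \<subseteq> Q" "W \<times> Q \<subseteq> ?O"
    using tube_lemma_right[of ?Y ?Y ?O ?S "Inr p"] pY by (meson closedin_closure_of openin_diff openin_topspace)
  have "Inl ` C i \<subseteq> V" if meets: "Inl ` C i \<inter> W \<noteq> {}" for i
  proof
    fix u :: "'a + 'b" assume u: "u \<in> Inl ` C i"
    obtain a where a: "a \<in> C i" "Inl a \<in> W" using meets by blast
    obtain b where b: "b \<in> C i" "u = Inl b" using u by blast
    have "(Inl a, u) \<in> ?P"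
      using a(1) b C unfolding same_block_def by (auto intro!: image_eqI[where x="(a,b)"])
    moreover have in_Y: "Inl a \<in> topspace ?Y" "u \<in> topspace ?Y"
      using a(1) b C by (auto simp: topspace_glue[OF f] glue_carrier_def)
    ultimately have "(Inl a, u) \<notin> ?O"
      using closure_of_subset_Int[of "prod_topology ?Y ?Y" ?P] by auto
    then show "u \<in> V" using a(2) in_Y W(3,4) by blast
  qed
  with W(1,2) show ?thesis using that by blast
qed

section \<open>Centres of the blocks\<close>

lemma compactin_finite_subcover_nbhds:
  assumes "compactin X S" "\<And>y. y \<in> S \<Longrightarrow> openin X (U y)" "\<And>y. y \<in> S \<Longrightarrow> y \<in> U y"
  obtains T where "finite T" "T \<subseteq> S" "S \<subseteq> (\<Union>y\<in>T. U y)"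
proof -
  obtain \<F> where "finite \<F>" "\<F> \<subseteq> U ` S" "S \<subseteq> \<Union>\<F>"
    using compactinD[OF assms(1), of "U ` S"] assms(2,3) by blast
  then show ?thesis using that by (metis finite_subset_image)
qed

definition tolerance :: "nat \<Rightarrow> real" where
  "tolerance n = 1 / real (Suc n)"

lemma tolerance_pos: "0 < tolerance n"
  by (simp add: tolerance_def)

lemma tolerance_antimono: "m \<le> n \<Longrightarrow> tolerance n \<le> tolerance m"
  by (simp add: tolerance_def frac_le)

lemma ex_tolerance_less:
  assumes "0 < t"
  obtains n where "tolerance n < t"
proof -
  obtain n where "inverse (real (Suc n)) < t"
    using reals_Archimedean[OF assms] by blast
  then show ?thesis using that by (simp add: tolerance_def divide_inverse)
qed

locale block_compactification = Metric_space M d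
  for M :: "'b set" and d +
  fixes X :: "'a topology" and Z :: "'b topology" and f :: "'a set \<Rightarrow> 'b set"
    and C :: "nat \<Rightarrow> 'a set"
  assumes Pers: "in_Pers (decomp_coarse X C) X Z f"
    and decomp: "is_coproduct_decomp X C"
    and compactin_C: "compactin X (C i)"
    and C_nonempty: "C i \<noteq> {}"
    and Z_eq: "Z = mtopology"
begin

abbreviation Y :: "('a + 'b) topology" where
  "Y \<equiv> glue X Z f"

abbreviation block :: "nat \<Rightarrow> ('a + 'b) set" where
  "block i \<equiv> Inl ` C i"

lemma admissible: "admissible X Z f"
  and compact_Y: "compact_space Y" and Hausdorff_Y: "Hausdorff_space Y"
  and dense: "Y closure_of (Inl ` topspace X) = topspace Y"
  and compact_Z: "compact_space Z"
  using Pers unfolding in_Pers_def hausdorff_compactification_def by auto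

lemma topspace_Z: "topspace Z = M"
  using Z_eq by simp

lemma topspace_Y: "topspace Y = Inl ` topspace X \<union> Inr ` M"
  by (simp add: topspace_glue[OF admissible] glue_carrier_def topspace_Z)

lemmas openin_C = is_coproduct_decompD(1)[OF decomp]
  and C_subset = is_coproduct_decompD(2)[OF decomp]
  and C_cover = is_coproduct_decompD(4)[OF decomp]
  and C_unique = is_coproduct_decompD(5)[OF decomp]

lemma openin_block: "openin Y (block i)"
  using openin_glue_Inl[OF admissible openin_C] .

lemma closedin_block: "closedin Y (block i)"
  using image_compactin[OF compactin_C continuous_map_glue_Inl[OF admissible]]
  by (rule compactin_imp_closedin[OF Hausdorff_Y])

lemma closedin_Union_blocks: "finite F \<Longrightarrow> closedin Y (\<Union>i\<in>F. block i)"
  using closedin_block by (intro closedin_Union) auto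

lemma closedin_Inr: "closedin Z S \<Longrightarrow> closedin Y (Inr ` S)"
  using closedin_glue_Inr[OF admissible] .

lemma mball_Inr_subset_nbhd:
  assumes "p \<in> M" "openin Y V" "Inr p \<in> V"
  obtains r where "0 < r" "Inr ` mball p r \<subseteq> V"
proof -
  have "openin Z {z \<in> M. Inr z \<in> V}"
    using continuous_map_glue_Inr[OF admissible] assms(2) unfolding continuous_map_def topspace_Z by blast
  moreover have "p \<in> {z \<in> M. Inr z \<in> V}" using assms(1,3) by simp
  ultimately obtain r where "0 < r" "mball p r \<subseteq> {z \<in> M. Inr z \<in> V}"
    unfolding Z_eq openin_mtopology by meson
  then show ?thesis using that by blast
qed

lemma blocks_shrink:
  assumes "p \<in> M" "openin Y V" "Inr p \<in> V"
  obtains W where "openin Y W" "Inr p \<in> W" "\<And>i. block i \<inter> W \<noteq> {} \<Longrightarrow> block i \<subseteq> V"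
proof (rule perspective_same_block_shrinks[OF admissible compact_Y C_subset _ _ assms(2,3)])
  show "perspective X Z f (same_block X C)"
    using Pers same_block_in_decomp_coarse[OF decomp] unfolding in_Pers_def by blast
  show "p \<in> topspace Z"
    using assms(1) topspace_Z by simp
qed (rule that)

lemma open_meets_block:
  assumes "openin Y U" "U \<noteq> {}"
  obtains j where "block j \<inter> U \<noteq> {}"
proof -
  obtain u where "u \<in> U" using assms(2) by blast
  then have "u \<in> Y closure_of (Inl ` topspace X)"
    using dense openin_subset[OF assms(1)] by auto
  then obtain x where "x \<in> topspace X" "Inl x \<in> U"
    using \<open>u \<in> U\<close> assms(1) unfolding in_closure_of by blast
  then show ?thesis using that C_cover by blast
qed

lemma finite_blocks_meeting:
  assumes S: "closedin Y S" "S \<inter> Inr ` M = {}"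
  shows "finite {i. block i \<inter> S \<noteq> {}}"
proof -
  have "S \<subseteq> Inl ` topspace X"
    using closedin_subset[OF S(1)] S(2) unfolding topspace_Y by auto
  have "S \<subseteq> \<Union>(range block)"
  proof
    fix u assume "u \<in> S"
    then obtain x where "u = Inl x" "x \<in> topspace X"
      using \<open>S \<subseteq> Inl ` topspace X\<close> by blast
    then show "u \<in> \<Union>(range block)" using C_cover by blast
  qed
  then obtain \<F> where "finite \<F>" "\<F> \<subseteq> range block" "S \<subseteq> \<Union>\<F>"
    using compactinD[OF closedin_compact_space[OF compact_Y S(1)], of "range block"]
      openin_block by blast
  then obtain I where I: "finite I" "S \<subseteq> (\<Union>i\<in>I. block i)"
    by (metis finite_subset_image)
  have "i \<in> I" if meets: "block i \<inter> S \<noteq> {}" for i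
  proof -
    obtain x j where "x \<in> C i" "x \<in> C j" "j \<in> I"
      using meets I(2) by blast
    then show ?thesis using C_unique by blast
  qed
  then have "{i. block i \<inter> S \<noteq> {}} \<subseteq> I" by blast
  then show ?thesis using I(1) by (rule finite_subset)
qed

lemma M_nonempty: "M \<noteq> {}"
proof
  assume "M = {}"
  then have "finite {i. block i \<inter> topspace Y \<noteq> {}}"
    by (intro finite_blocks_meeting) auto
  moreover have "block i \<inter> topspace Y \<noteq> {}" for i
    using C_nonempty[of i] C_subset[of i] unfolding topspace_Y by auto
  ultimately show False by simp
qed

definition net :: "nat \<Rightarrow> 'b set" where
  "net n = (SOME N. finite N \<and> N \<subseteq> M \<and> M \<subseteq> (\<Union>c\<in>N. mball c (tolerance n)))"

lemma finite_net: "finite (net n)"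
  and net_subset: "net n \<subseteq> M"
  and net_cover: "M \<subseteq> (\<Union>c\<in>net n. mball c (tolerance n))"
proof -
  have "\<exists>N. finite N \<and> N \<subseteq> M \<and> M \<subseteq> (\<Union>c\<in>N. mball c (tolerance n))"
    using compact_Z tolerance_pos[of n]
    unfolding Z_eq compact_space_eq_mcomplete_mtotally_bounded mtotally_bounded_def by blast
  from someI_ex[OF this]
  show "finite (net n)" "net n \<subseteq> M" "M \<subseteq> (\<Union>c\<in>net n. mball c (tolerance n))"
    unfolding net_def by blast+
qed

lemma separating_nbhd_exists:
  assumes "r < s"
  shows "\<exists>V. openin Y V \<and> Inr ` mball c r \<subseteq> V \<and> Y closure_of V \<inter> Inr ` M \<subseteq> Inr ` mball c s"
proof -
  have "normal_space Y"
    using compact_Hausdorff_or_regular_imp_normal_space compact_Y Hausdorff_Y by blast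
  moreover have "closedin Y (Inr ` mcball c r)"
    using closedin_Inr Z_eq by simp
  moreover have "closedin Y (Inr ` (M - mball c s))"
    using closedin_Inr Z_eq closedin_diff[OF closedin_topspace openin_mball] by simp
  moreover have "disjnt (Inr ` mcball c r) (Inr ` (M - mball c s))"
    using mcball_subset_mball_concentric[OF assms] by (auto simp: disjnt_def)
  ultimately obtain U U' where U: "openin Y U" "openin Y U'" "Inr ` mcball c r \<subseteq> U"
      "Inr ` (M - mball c s) \<subseteq> U'" "disjnt U U'"
    unfolding normal_space_def by meson
  have "U' \<inter> Y closure_of U = {}"
    using openin_Int_closure_of_eq_empty[OF U(2)] U(5) by (auto simp: disjnt_def)
  then have "Y closure_of U \<inter> Inr ` M \<subseteq> Inr ` mball c s"
    using U(4) by auto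
  moreover have "Inr ` mball c r \<subseteq> U"
    using U(3) mball_subset_mcball by blast
  ultimately show ?thesis using U(1) by blast
qed

definition nbhd :: "nat \<Rightarrow> 'b \<Rightarrow> ('a + 'b) set" where
  "nbhd n c = (SOME V. openin Y V \<and> Inr ` mball c (tolerance n) \<subseteq> V \<and>
                 Y closure_of V \<inter> Inr ` M \<subseteq> Inr ` mball c (2 * tolerance n))"

lemma openin_nbhd: "openin Y (nbhd n c)"
  and mball_subset_nbhd: "Inr ` mball c (tolerance n) \<subseteq> nbhd n c"
  and closure_nbhd_subset: "Y closure_of nbhd n c \<inter> Inr ` M \<subseteq> Inr ` mball c (2 * tolerance n)"
  using someI_ex[OF separating_nbhd_exists[of "tolerance n" "2 * tolerance n" c]] tolerance_pos[of n]
  unfolding nbhd_def by auto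

lemma finite_blocks_in_far_nbhds:
  assumes far: "2 * tolerance a + 2 * tolerance b \<le> d c c'"
  shows "finite {i. block i \<subseteq> nbhd a c \<inter> nbhd b c'}"
proof -
  let ?S = "Y closure_of nbhd a c \<inter> Y closure_of nbhd b c'"
  have "z \<notin> M" if "Inr z \<in> ?S" for z
  proof
    assume "z \<in> M"
    then have "z \<in> mball c (2 * tolerance a)" "z \<in> mball c' (2 * tolerance b)"
      using that closure_nbhd_subset by blast+
    then have "d c c' < 2 * tolerance a + 2 * tolerance b"
      using triangle[of c z c'] commute[of z c'] by auto
    then show False using far by linarith
  qed
  then have "finite {i. block i \<inter> ?S \<noteq> {}}"
    by (intro finite_blocks_meeting) auto
  moreover have "{i. block i \<subseteq> nbhd a c \<inter> nbhd b c'} \<subseteq> {i. block i \<inter> ?S \<noteq> {}}"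
  proof
    fix i assume "i \<in> {i. block i \<subseteq> nbhd a c \<inter> nbhd b c'}"
    then show "i \<in> {i. block i \<inter> ?S \<noteq> {}}"
      using C_nonempty[of i] closure_of_subset[OF openin_subset[OF openin_nbhd]] by blast
  qed
  ultimately show ?thesis
    by (rule finite_subset[rotated])
qed

definition conflicting :: "nat \<Rightarrow> nat set" where
  "conflicting n = {i. \<exists>a\<le>n. \<exists>b\<le>n. \<exists>c\<in>net a. \<exists>c'\<in>net b.
      2 * tolerance a + 2 * tolerance b \<le> d c c' \<and> block i \<subseteq> nbhd a c \<inter> nbhd b c'}"

lemma finite_conflicting: "finite (conflicting n)"
proof -
  define far where "far = (\<lambda>((a,c),(b,c')).
    {i. 2 * tolerance a + 2 * tolerance b \<le> d c c' \<and> block i \<subseteq> nbhd a c \<inter> nbhd b c'})"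
  let ?I = "Sigma {..n} net"
  have "conflicting n \<subseteq> (\<Union>q\<in>?I \<times> ?I. far q)"
  proof
    fix i assume "i \<in> conflicting n"
    then obtain a b c c' where "a \<le> n" "b \<le> n" "c \<in> net a" "c' \<in> net b"
        "2 * tolerance a + 2 * tolerance b \<le> d c c'" "block i \<subseteq> nbhd a c \<inter> nbhd b c'"
      unfolding conflicting_def by blast
    then show "i \<in> (\<Union>q\<in>?I \<times> ?I. far q)"
      unfolding far_def by (intro UN_I[of "((a,c),(b,c'))"]) auto
  qed
  moreover have "finite (far q)" for q
  proof -
    obtain a c b c' where q: "q = ((a,c),(b,c'))" by (metis prod.collapse)
    show ?thesis
      using finite_blocks_in_far_nbhds[of a b c c'] unfolding q far_def
      by (cases "2 * tolerance a + 2 * tolerance b \<le> d c c'") auto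
  qed
  moreover have "finite ?I" using finite_net by blast
  ultimately show ?thesis
    by (meson finite_SigmaI finite_UN_I finite_subset)
qed

definition good_level :: "nat \<Rightarrow> nat \<Rightarrow> bool" where
  "good_level i n \<longleftrightarrow> n \<le> i \<and> i \<notin> conflicting n \<and> (\<exists>c\<in>net n. block i \<subseteq> nbhd n c)"

definition level :: "nat \<Rightarrow> nat" where
  "level i = (GREATEST n. good_level i n)"

text \<open>Blocks without a good level get an arbitrary centre. This is harmless: near any point of
  the remainder, all but finitely many blocks have a good level.\<close>

definition centre :: "nat \<Rightarrow> 'b" where
  "centre i = (if \<exists>n. good_level i n
               then SOME c. c \<in> net (level i) \<and> block i \<subseteq> nbhd (level i) c
               else SOME z. z \<in> M)"

lemma good_level_level:
  assumes "good_level i n"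
  shows "good_level i (level i)" "n \<le> level i"
  using GreatestI_nat[of "good_level i" n i] Greatest_le_nat[of "good_level i" n i] assms
  unfolding level_def good_level_def by auto

lemma centre_at_level:
  assumes "good_level i n"
  shows "centre i \<in> net (level i)" "block i \<subseteq> nbhd (level i) (centre i)"
proof -
  have "\<exists>c. c \<in> net (level i) \<and> block i \<subseteq> nbhd (level i) c"
    using good_level_level(1)[OF assms] unfolding good_level_def by blast
  from someI_ex[OF this] assms
  show "centre i \<in> net (level i)" "block i \<subseteq> nbhd (level i) (centre i)"
    unfolding centre_def by auto
qed

lemma centre_in_M: "centre i \<in> M"
proof (cases "\<exists>n. good_level i n")
  case True
  then show ?thesis using centre_at_level(1) net_subset by blast
next
  case False
  then show ?thesis using someI_ex[of "\<lambda>z. z \<in> M"] M_nonempty by (auto simp: centre_def)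
qed

text \<open>The centre is chosen at the finest good level, so any good level pins it down up to
  four times its tolerance: a block inside two far apart neighbourhoods would be conflicting.\<close>

lemma dist_centre_less:
  assumes good: "good_level i n" and c: "c \<in> net n" "block i \<subseteq> nbhd n c"
  shows "d (centre i) c < 4 * tolerance n"
proof -
  have "i \<in> conflicting (level i)"
    if far: "2 * tolerance (level i) + 2 * tolerance n \<le> d (centre i) c"
    unfolding conflicting_def
    using far c centre_at_level[OF good] good_level_level(2)[OF good] order_refl by blast
  moreover have "i \<notin> conflicting (level i)"
    using good_level_level(1)[OF good] by (simp add: good_level_def)
  moreover have "tolerance (level i) \<le> tolerance n"
    using tolerance_antimono good_level_level(2)[OF good] .
  ultimately show ?thesis by linarith
qed

lemma blocks_near_have_centres_near:
  assumes p: "p \<in> M" and \<delta>: "0 < \<delta>"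
  obtains U F where "openin Y U" "Inr p \<in> U" "finite F"
    "\<And>i. i \<notin> F \<Longrightarrow> block i \<inter> U \<noteq> {} \<Longrightarrow> d (centre i) p < \<delta>"
proof -
  obtain m where m: "tolerance m < \<delta> / 5"
    using ex_tolerance_less \<delta> by (metis divide_pos_pos zero_less_numeral)
  obtain c where c: "c \<in> net m" "p \<in> mball c (tolerance m)"
    using net_cover p by blast
  then have "Inr p \<in> nbhd m c" using mball_subset_nbhd by blast
  then obtain W where W: "openin Y W" "Inr p \<in> W" "\<And>i. block i \<inter> W \<noteq> {} \<Longrightarrow> block i \<subseteq> nbhd m c"
    using blocks_shrink[OF p openin_nbhd] by blast
  have near: "d (centre i) p < \<delta>" if i: "i \<notin> {..<m} \<union> conflicting m" "block i \<inter> W \<noteq> {}" for i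
  proof -
    have inside: "block i \<subseteq> nbhd m c" using W(3) i(2) by blast
    then have "good_level i m" using i(1) c(1) unfolding good_level_def by auto
    then have "d (centre i) c < 4 * tolerance m" using dist_centre_less c(1) inside by blast
    moreover have "d c p < tolerance m" using c(2) by simp
    moreover have "d (centre i) p \<le> d (centre i) c + d c p"
      using triangle centre_in_M c(2) p by auto
    ultimately show ?thesis using m by linarith
  qed
  have "finite ({..<m} \<union> conflicting m)"
    using finite_conflicting by simp
  from that[OF W(1,2) this near] show ?thesis .
qed

lemma infinite_centres_near:
  assumes p: "p \<in> M" and \<delta>: "0 < \<delta>"
  shows "infinite {i. d (centre i) p < \<delta>}"
proof
  assume fin: "finite {i. d (centre i) p < \<delta>}"
  obtain U F where U: "openin Y U" "Inr p \<in> U" "finite F"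
    and near: "\<And>i. i \<notin> F \<Longrightarrow> block i \<inter> U \<noteq> {} \<Longrightarrow> d (centre i) p < \<delta>"
    using blocks_near_have_centres_near[OF p \<delta>] by blast
  let ?G = "F \<union> {i. d (centre i) p < \<delta>}"
  have "openin Y (U - (\<Union>i\<in>?G. block i))"
    using U(1,3) fin by (intro openin_diff closedin_Union_blocks) auto
  moreover have "Inr p \<in> U - (\<Union>i\<in>?G. block i)"
    using U(2) by auto
  ultimately obtain j where j: "block j \<inter> (U - (\<Union>i\<in>?G. block i)) \<noteq> {}"
    using open_meets_block by (metis empty_iff)
  have "j \<notin> ?G"
  proof
    assume "j \<in> ?G"
    then have "block j \<subseteq> (\<Union>i\<in>?G. block i)" by blast
    then show False using j by blast
  qed
  moreover have "block j \<inter> U \<noteq> {}" using j by blast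
  ultimately show False using near by blast
qed

lemma nbhd_with_centres_apart:
  assumes p: "p \<in> M" and y: "y \<in> topspace Y" "y \<noteq> Inr p"
  obtains U \<epsilon> F where "openin Y U" "y \<in> U" "0 < \<epsilon>" "finite F"
    "\<And>i. i \<notin> F \<Longrightarrow> block i \<inter> U \<noteq> {} \<Longrightarrow> \<epsilon> \<le> d (centre i) p"
proof -
  consider x where "y = Inl x" "x \<in> topspace X" | q where "y = Inr q" "q \<in> M" "q \<noteq> p"
    using y unfolding topspace_Y by blast
  then show ?thesis
  proof cases
    case 1
    then obtain j where j: "x \<in> C j" using C_cover by blast
    show ?thesis
    proof (rule that[of "block j" 1 "{j}"])
      show "1 \<le> d (centre i) p" if "i \<notin> {j}" "block i \<inter> block j \<noteq> {}" for i
        using that C_unique by blast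
    qed (use 1 j openin_block in auto)
  next
    case 2
    define \<epsilon> where "\<epsilon> = d q p / 2"
    have \<epsilon>: "0 < \<epsilon>" using 2 p by (simp add: \<epsilon>_def)
    obtain U F where U: "openin Y U" "Inr q \<in> U" "finite F"
      and near: "\<And>i. i \<notin> F \<Longrightarrow> block i \<inter> U \<noteq> {} \<Longrightarrow> d (centre i) q < \<epsilon>"
      using blocks_near_have_centres_near[OF 2(2) \<epsilon>] by blast
    have "\<epsilon> \<le> d (centre i) p" if "i \<notin> F" "block i \<inter> U \<noteq> {}" for i
    proof -
      have "d q p \<le> d q (centre i) + d (centre i) p"
        using triangle 2(2) centre_in_M p by blast
      then show ?thesis
        using near[OF that] commute[of q "centre i"] unfolding \<epsilon>_def by linarith
    qed
    with that[OF U(1) _ \<epsilon> U(3)] show ?thesis using 2(1) U(2) by blast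
  qed
qed

lemma centres_near_have_blocks_inside:
  assumes p: "p \<in> M" and V: "openin Y V" "Inr p \<in> V"
  obtains \<delta> F where "0 < \<delta>" "finite F" "\<And>i. i \<notin> F \<Longrightarrow> d (centre i) p < \<delta> \<Longrightarrow> block i \<subseteq> V"
proof -
  let ?S = "topspace Y - V"
  have "\<exists>U \<epsilon> F. openin Y U \<and> y \<in> U \<and> 0 < \<epsilon> \<and> finite F \<and>
          (\<forall>i. i \<notin> F \<longrightarrow> block i \<inter> U \<noteq> {} \<longrightarrow> \<epsilon> \<le> d (centre i) p)" if "y \<in> ?S" for y
    using nbhd_with_centres_apart[OF p, of y] that V(2) by (metis DiffE)
  then obtain U \<epsilon> F where U: "\<And>y. y \<in> ?S \<Longrightarrow> openin Y (U y) \<and> y \<in> U y \<and> 0 < \<epsilon> y \<and> finite (F y) \<and>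
          (\<forall>i. i \<notin> F y \<longrightarrow> block i \<inter> U y \<noteq> {} \<longrightarrow> \<epsilon> y \<le> d (centre i) p)"
    by metis
  have "compactin Y ?S"
    using V(1) compact_Y by (intro closedin_compact_space) auto
  then obtain T where T: "finite T" "T \<subseteq> ?S" "?S \<subseteq> (\<Union>y\<in>T. U y)"
    using compactin_finite_subcover_nbhds[of Y ?S U] U by blast
  define \<delta> where "\<delta> = Min (insert 1 (\<epsilon> ` T))"
  have \<delta>: "0 < \<delta>"
    unfolding \<delta>_def using T U by (subst Min_gr_iff) auto
  have \<delta>_le: "\<delta> \<le> \<epsilon> y" if "y \<in> T" for y
    unfolding \<delta>_def using T(1) that by (intro Min_le) auto
  have inside: "block i \<subseteq> V" if i: "i \<notin> (\<Union>y\<in>T. F y)" "d (centre i) p < \<delta>" for i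
  proof
    fix u assume u: "u \<in> block i"
    show "u \<in> V"
    proof (rule ccontr)
      assume "u \<notin> V"
      moreover have "u \<in> topspace Y" using u C_subset unfolding topspace_Y by blast
      ultimately obtain y where y: "y \<in> T" "u \<in> U y" using T(3) by blast
      then have "\<epsilon> y \<le> d (centre i) p" using U[of y] T(2) i(1) u by blast
      then show False using \<delta>_le[OF y(1)] i(2) by linarith
    qed
  qed
  have "finite (\<Union>y\<in>T. F y)" using T U by blast
  from that[OF \<delta> this inside] show ?thesis .
qed

end

section \<open>Back-and-forth matching\<close>

definition finite_matching :: "('a \<times> 'b) set \<Rightarrow> bool" where
  "finite_matching P \<longleftrightarrow> finite P \<and> single_valued P \<and> single_valued (P\<inverse>)"

lemma finite_matching_converse [simp]: "finite_matching (P\<inverse>) \<longleftrightarrow> finite_matching P"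
  by (auto simp: finite_matching_def)

lemma finite_matching_insert:
  assumes "finite_matching P" "i \<notin> Domain P" "j \<notin> Range P"
  shows "finite_matching (insert (i, j) P)"
  using assms unfolding finite_matching_def single_valued_def by blast

lemma Least_not_in_finite:
  fixes S :: "nat set"
  assumes "finite S"
  shows "(LEAST i. i \<notin> S) \<notin> S"
  using LeastI_ex[of "\<lambda>i. i \<notin> S"] ex_new_if_finite[OF infinite_UNIV_nat assms] by blast

lemma atMost_subset_insert_Least:
  fixes S :: "nat set"
  assumes "{..<k} \<subseteq> S"
  shows "{..k} \<subseteq> insert (LEAST i. i \<notin> S) S"
proof
  fix x assume x: "x \<in> {..k}"
  show "x \<in> insert (LEAST i. i \<notin> S) S"
  proof (cases "x \<in> S")
    case False
    then have "\<not> x < k" using assms by blast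
    then have "x = k" using x by simp
    moreover have "(LEAST i. i \<notin> S) \<le> k" using False \<open>x = k\<close> by (simp add: Least_le)
    moreover have "\<not> (LEAST i. i \<notin> S) < k"
      using LeastI[of "\<lambda>i. i \<notin> S", OF False] assms by blast
    ultimately show ?thesis by simp
  qed simp
qed

definition extend_forth :: "(nat \<Rightarrow> 'b \<Rightarrow> real) \<Rightarrow> real \<Rightarrow> (nat \<times> 'b) set \<Rightarrow> (nat \<times> 'b) set" where
  "extend_forth D t P =
     (let i = LEAST i. i \<notin> Domain P in insert (i, SOME j. j \<notin> Range P \<and> D i j < t) P)"

lemma extend_forth:
  fixes D :: "nat \<Rightarrow> 'b \<Rightarrow> real"
  assumes P: "finite_matching P" and D: "\<And>i. infinite {j. D i j < t}"
  shows "finite_matching (extend_forth D t P)"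
    and "P \<subseteq> extend_forth D t P"
    and "{..<k} \<subseteq> Domain P \<Longrightarrow> {..k} \<subseteq> Domain (extend_forth D t P)"
    and "(a, b) \<in> extend_forth D t P \<Longrightarrow> (a, b) \<in> P \<or> D a b < t"
proof -
  let ?i = "LEAST i. i \<notin> Domain P"
  let ?j = "SOME j. j \<notin> Range P \<and> D ?i j < t"
  have fin: "finite P" using P by (simp add: finite_matching_def)
  have "infinite ({j. D ?i j < t} - Range P)"
    using D finite_Range[OF fin] by (rule Diff_infinite_finite[rotated])
  then have "\<exists>j. j \<notin> Range P \<and> D ?i j < t"
    using infinite_imp_nonempty by blast
  from someI_ex[OF this] have j: "?j \<notin> Range P" "D ?i ?j < t"
    by simp_all
  have ext: "extend_forth D t P = insert (?i, ?j) P"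
    by (simp add: extend_forth_def Let_def)
  show "finite_matching (extend_forth D t P)"
    unfolding ext using P Least_not_in_finite[OF finite_Domain[OF fin]] j(1)
    by (rule finite_matching_insert)
  show "P \<subseteq> extend_forth D t P" unfolding ext by blast
  show "{..k} \<subseteq> Domain (extend_forth D t P)" if "{..<k} \<subseteq> Domain P"
    using atMost_subset_insert_Least[OF that] unfolding ext by auto
  show "(a, b) \<in> P \<or> D a b < t" if "(a, b) \<in> extend_forth D t P"
    using that j(2) unfolding ext by auto
qed

lemma bij_of_single_valued:
  assumes "single_valued R" "single_valued (R\<inverse>)" "\<And>a. a \<in> Domain R" "\<And>b. b \<in> Range R"
  obtains \<sigma> where "bij \<sigma>" "\<And>a. (a, \<sigma> a) \<in> R"
proof -
  define \<sigma> where "\<sigma> a = (THE b. (a, b) \<in> R)" for a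
  have \<sigma>: "(a, \<sigma> a) \<in> R" for a
  proof -
    have "\<exists>!b. (a, b) \<in> R" using assms(1) assms(3)[of a] by (auto simp: single_valued_def)
    then show ?thesis unfolding \<sigma>_def by (rule theI')
  qed
  have "bij \<sigma>"
  proof (rule bijI)
    show "inj \<sigma>"
      using \<sigma> assms(2) by (metis converseI injI single_valuedD)
    show "surj \<sigma>"
      unfolding surj_def
    proof
      fix b
      obtain a where "(a, b) \<in> R" using assms(4)[of b] by blast
      then show "\<exists>a. b = \<sigma> a" using \<sigma>[of a] assms(1) by (auto dest: single_valuedD)
    qed
  qed
  with \<sigma> show ?thesis using that by blast
qed

text \<open>The backward half of each step is the forward step applied to the converse matching and
  the transposed cost.\<close>

primrec back_and_forth :: "(nat \<Rightarrow> nat \<Rightarrow> real) \<Rightarrow> nat \<Rightarrow> (nat \<times> nat) set" where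
  "back_and_forth D 0 = {}"
| "back_and_forth D (Suc k) =
     (extend_forth (\<lambda>j i. D i j) (tolerance k) ((extend_forth D (tolerance k) (back_and_forth D k))\<inverse>))\<inverse>"

context
  fixes D :: "nat \<Rightarrow> nat \<Rightarrow> real"
  assumes rows: "\<And>i t. 0 < t \<Longrightarrow> infinite {j. D i j < t}"
    and columns: "\<And>j t. 0 < t \<Longrightarrow> infinite {i. D i j < t}"
begin

lemma back_and_forth_step:
  fixes P :: "(nat \<times> nat) set" and k :: nat
  assumes "finite_matching P"
  defines "Q \<equiv> (extend_forth (\<lambda>j i. D i j) (tolerance k) ((extend_forth D (tolerance k) P)\<inverse>))\<inverse>"
  shows "finite_matching Q" "P \<subseteq> Q"
    and "{..<k} \<subseteq> Domain P \<Longrightarrow> {..<k} \<subseteq> Range P \<Longrightarrow> {..k} \<subseteq> Domain Q \<and> {..k} \<subseteq> Range Q"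
    and "(a, b) \<in> Q \<Longrightarrow> (a, b) \<in> P \<or> D a b < tolerance k"
proof -
  let ?P' = "extend_forth D (tolerance k) P"
  have "infinite {j. D i j < tolerance k}" for i
    using rows tolerance_pos by blast
  note forward = extend_forth[where D=D, OF assms(1) this]
  have matching: "finite_matching (?P'\<inverse>)" using forward(1) by simp
  have "infinite {i. D i j < tolerance k}" for j
    using columns tolerance_pos by blast
  note backward = extend_forth[where D="\<lambda>j i. D i j", OF matching this]
  show "finite_matching Q" unfolding Q_def using backward(1) by simp
  show "P \<subseteq> Q" unfolding Q_def using forward(2) backward(2) by (meson converse_subset_swap order_trans)
  show "{..k} \<subseteq> Domain Q \<and> {..k} \<subseteq> Range Q" if "{..<k} \<subseteq> Domain P" "{..<k} \<subseteq> Range P"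
  proof
    show "{..k} \<subseteq> Domain Q" unfolding Q_def using forward(3)[OF that(1)] backward(2) by blast
    have "{..<k} \<subseteq> Domain (?P'\<inverse>)" using that(2) forward(2) by blast
    then show "{..k} \<subseteq> Range Q" unfolding Q_def using backward(3) by simp
  qed
  show "(a, b) \<in> P \<or> D a b < tolerance k" if "(a, b) \<in> Q"
    using that forward(4) backward(4)[of b a] unfolding Q_def by auto
qed

lemma finite_matching_back_and_forth: "finite_matching (back_and_forth D k)"
proof (induction k)
  case 0
  then show ?case by (simp add: finite_matching_def)
next
  case (Suc k)
  then show ?case using back_and_forth_step(1) by simp
qed

lemma back_and_forth_mono: "m \<le> n \<Longrightarrow> back_and_forth D m \<subseteq> back_and_forth D n"
proof (induction n rule: dec_induct)
  case (step n)
  then show ?case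
    using back_and_forth_step(2)[OF finite_matching_back_and_forth[of n]] by auto
qed simp

lemma lessThan_subset_back_and_forth:
  "{..<k} \<subseteq> Domain (back_and_forth D k) \<and> {..<k} \<subseteq> Range (back_and_forth D k)"
proof (induction k)
  case (Suc k)
  then show ?case
    using back_and_forth_step(3)[OF finite_matching_back_and_forth[of k]]
    by (simp add: lessThan_Suc_atMost)
qed simp

lemma back_and_forth_cost_less:
  assumes "k \<le> n" "(a, b) \<in> back_and_forth D n"
  shows "(a, b) \<in> back_and_forth D k \<or> D a b < tolerance k"
  using assms
proof (induction n rule: dec_induct)
  case (step n)
  then have "(a, b) \<in> back_and_forth D n \<or> D a b < tolerance n"
    using back_and_forth_step(4)[OF finite_matching_back_and_forth[of n]] by simp
  moreover have "tolerance n \<le> tolerance k" using tolerance_antimono step.hyps(1) .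
  ultimately show ?case using step.IH by linarith
qed simp

lemma bij_with_vanishing_cost:
  obtains \<sigma> where "bij \<sigma>" "\<And>t. 0 < t \<Longrightarrow> finite {i. t \<le> D i (\<sigma> i)}"
proof -
  define R where "R = (\<Union>k. back_and_forth D k)"
  have in_stage: "\<exists>k. (a, b) \<in> back_and_forth D k \<and> (a', b') \<in> back_and_forth D k"
    if "(a, b) \<in> R" "(a', b') \<in> R" for a b a' b'
    using that back_and_forth_mono unfolding R_def
    by (metis UN_E max.cobounded1 max.cobounded2 subsetD)
  have R: "single_valued R" "single_valued (R\<inverse>)"
    using in_stage finite_matching_back_and_forth
    unfolding single_valued_def finite_matching_def by (meson converseD converseI)+
  have total: "a \<in> Domain R" "a \<in> Range R" for a
    using lessThan_subset_back_and_forth[of "Suc a"] unfolding R_def by blast+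
  obtain \<sigma> where "bij \<sigma>" and \<sigma>: "\<And>a. (a, \<sigma> a) \<in> R"
    using bij_of_single_valued[OF R total] by blast
  moreover have "finite {i. t \<le> D i (\<sigma> i)}" if t: "0 < t" for t
  proof -
    obtain k where k: "tolerance k < t" using ex_tolerance_less[OF t] .
    have "{i. t \<le> D i (\<sigma> i)} \<subseteq> Domain (back_and_forth D k)"
    proof
      fix i assume i: "i \<in> {i. t \<le> D i (\<sigma> i)}"
      obtain n where "(i, \<sigma> i) \<in> back_and_forth D n" using \<sigma>[of i] unfolding R_def by blast
      then have "(i, \<sigma> i) \<in> back_and_forth D (max n k)"
        using back_and_forth_mono[of n "max n k"] by auto
      then show "i \<in> Domain (back_and_forth D k)"
        using back_and_forth_cost_less[of k "max n k" i "\<sigma> i"] i k by auto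
    qed
    then show ?thesis
      using finite_matching_back_and_forth[of k] finite_Domain
      unfolding finite_matching_def by (metis finite_subset)
  qed
  ultimately show ?thesis using that by blast
qed

end

section \<open>The homeomorphism\<close>

lemma bij_betw_topspace_of_blocks:
  assumes C: "is_coproduct_decomp X C" and C': "is_coproduct_decomp X C'" and \<sigma>: "bij \<sigma>"
    and blocks: "\<And>i. bij_betw \<psi> (C i) (C' (\<sigma> i))"
  shows "bij_betw \<psi> (topspace X) (topspace X)"
proof -
  have "disjoint_family (\<lambda>i. C' (\<sigma> i))"
    using is_coproduct_decompD(5)[OF C'] bij_is_inj[OF \<sigma>] unfolding disjoint_family_on_def
    by (metis disjoint_iff injD)
  then have "bij_betw \<psi> (\<Union>i. C i) (\<Union>i. C' (\<sigma> i))"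
    using blocks by (intro bij_betw_UNION_disjoint) auto
  moreover have "(\<Union>i. C' (\<sigma> i)) = \<Union>(C' ` range \<sigma>)"
    by (simp add: image_image)
  ultimately show ?thesis
    using is_coproduct_decompD(3)[OF C] is_coproduct_decompD(3)[OF C'] bij_is_surj[OF \<sigma>] by simp
qed

lemma block_permuting_map:
  fixes K :: "'c topology" and X :: "'a topology"
    and C C' :: "nat \<Rightarrow> 'a set" and \<eta> \<eta>' :: "nat \<Rightarrow> 'c \<Rightarrow> 'a"
  assumes C: "is_coproduct_decomp X C" and C': "is_coproduct_decomp X C'"
    and \<eta>: "\<And>i. homeomorphic_map K (subtopology X (C i)) (\<eta> i)"
    and \<eta>': "\<And>i. homeomorphic_map K (subtopology X (C' i)) (\<eta>' i)"
    and \<sigma>: "bij \<sigma>"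
  obtains \<psi> where "continuous_map X X \<psi>" "bij_betw \<psi> (topspace X) (topspace X)"
    "\<And>i x. x \<in> C i \<Longrightarrow> \<psi> x \<in> C' (\<sigma> i)"
proof -
  have "\<forall>i. \<exists>\<theta>. homeomorphic_maps K (subtopology X (C i)) (\<eta> i) \<theta>"
    using \<eta> homeomorphic_map_maps by blast
  then obtain \<theta> where "\<And>i. homeomorphic_maps K (subtopology X (C i)) (\<eta> i) (\<theta> i)"
    by metis
  then have "homeomorphic_map (subtopology X (C i)) K (\<theta> i)" for i
    using homeomorphic_maps_map by blast
  then have \<phi>: "homeomorphic_map (subtopology X (C i)) (subtopology X (C' (\<sigma> i))) (\<eta>' (\<sigma> i) \<circ> \<theta> i)" for i
    using \<eta>' homeomorphic_map_compose by blast
  have "continuous_map (subtopology X (C i)) X (\<eta>' (\<sigma> i) \<circ> \<theta> i)" for i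
    using homeomorphic_imp_continuous_map[OF \<phi>] continuous_map_in_subtopology by blast
  moreover have "\<eta>' (\<sigma> i) (\<theta> i x) = \<eta>' (\<sigma> j) (\<theta> j x)" if "x \<in> C i" "x \<in> C j" for i j x
    using that is_coproduct_decompD(5)[OF C] by blast
  ultimately obtain \<psi> where \<psi>: "continuous_map X X \<psi>"
    and \<psi>_eq: "\<And>x i. x \<in> topspace X \<inter> C i \<Longrightarrow> \<psi> x = \<eta>' (\<sigma> i) (\<theta> i x)"
    using pasting_lemma_exists[where X=X and T=C and I=UNIV and Y=X and f="\<lambda>i. \<eta>' (\<sigma> i) \<circ> \<theta> i"]
      is_coproduct_decompD(1,3)[OF C] by (metis (no_types, lifting) IntE UNIV_I comp_apply order_refl)
  have "bij_betw (\<eta>' (\<sigma> i) \<circ> \<theta> i) (C i) (C' (\<sigma> i))" for i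
    using homeomorphic_imp_injective_map[OF \<phi>] homeomorphic_imp_surjective_map[OF \<phi>]
      is_coproduct_decompD(2)[OF C] is_coproduct_decompD(2)[OF C']
    by (simp add: bij_betw_def inf.absorb2)
  moreover have "bij_betw \<psi> (C i) (C' (\<sigma> i)) \<longleftrightarrow> bij_betw (\<eta>' (\<sigma> i) \<circ> \<theta> i) (C i) (C' (\<sigma> i))" for i
    using \<psi>_eq is_coproduct_decompD(2)[OF C] by (intro bij_betw_cong) auto
  ultimately have blocks: "bij_betw \<psi> (C i) (C' (\<sigma> i))" for i
    by blast
  show ?thesis
  proof (rule that[OF \<psi> bij_betw_topspace_of_blocks[OF C C' \<sigma> blocks]])
    show "\<psi> x \<in> C' (\<sigma> i)" if "x \<in> C i" for i x
      using blocks that bij_betwE by blast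
  qed
qed

lemma block_compactification_of_homeomorphic_blocks:
  fixes K :: "'c topology" and \<eta> :: "nat \<Rightarrow> 'c \<Rightarrow> 'a"
  assumes "Metric_space M d" "Z = Metric_space.mtopology M d"
    and K: "compact_space K" "topspace K \<noteq> {}"
    and C: "is_coproduct_decomp X C" and \<eta>: "\<And>i. homeomorphic_map K (subtopology X (C i)) (\<eta> i)"
    and "in_Pers (decomp_coarse X C) X Z f"
  shows "block_compactification M d X Z f C"
proof -
  note sub = is_coproduct_decompD(2)[OF C]
  have "compact_space (subtopology X (C i))" for i
    using homeomorphic_compact_space[OF homeomorphic_map_imp_homeomorphic_space[OF \<eta>]] K(1) by blast
  then have "compactin X (C i)" for i
    using sub compactin_subspace by blast
  moreover have "C i \<noteq> {}" for i
    using homeomorphic_imp_surjective_map[OF \<eta>[of i]] sub[of i] K(2) by auto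
  ultimately show ?thesis
    using assms unfolding block_compactification_def block_compactification_axioms_def by blast
qed

lemma homeomorphic_glue_of_empty:
  assumes "topspace X = {}" "hausdorff_compactification X Z f" "hausdorff_compactification X Z g"
  shows "glue X Z f homeomorphic_space glue X Z g"
proof -
  have "topspace (glue X Z f) = {}" "topspace (glue X Z g) = {}"
    using assms unfolding hausdorff_compactification_def by auto
  then show ?thesis by (simp add: homeomorphic_empty_space_eq)
qed

locale block_compactification_pair =
  Y1: block_compactification M d X Z f C + Y2: block_compactification M d X Z g C'
  for M :: "'b set" and d and X :: "'a topology" and Z :: "'b topology"
    and f g :: "'a set \<Rightarrow> 'b set" and C C' :: "nat \<Rightarrow> 'a set"
begin

lemma centres_matching:
  obtains \<sigma> where "bij \<sigma>" "\<And>t. 0 < t \<Longrightarrow> finite {i. t \<le> d (Y1.centre i) (Y2.centre (\<sigma> i))}"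
proof -
  have rows: "infinite {j. d (Y1.centre i) (Y2.centre j) < t}" if "0 < t" for i t
    using Y2.infinite_centres_near[OF Y1.centre_in_M[of i] that]
    by (simp add: Y1.commute[of "Y1.centre i"])
  have columns: "infinite {i. d (Y1.centre i) (Y2.centre j) < t}" if "0 < t" for j t
    using Y1.infinite_centres_near[OF Y2.centre_in_M[of j] that] .
  show ?thesis
    using bij_with_vanishing_cost[where D="\<lambda>i j. d (Y1.centre i) (Y2.centre j)", OF rows columns] that
    by metis
qed

end

locale matched_block_compactifications = block_compactification_pair +
  fixes \<psi> and \<sigma> :: "nat \<Rightarrow> nat"
  assumes continuous_\<psi>: "continuous_map X X \<psi>"
    and bij_\<psi>: "bij_betw \<psi> (topspace X) (topspace X)"
    and \<psi>_block: "\<And>i x. x \<in> C i \<Longrightarrow> \<psi> x \<in> C' (\<sigma> i)"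
    and inj_\<sigma>: "inj \<sigma>"
    and centres_match: "\<And>t. 0 < t \<Longrightarrow> finite {i. t \<le> d (Y1.centre i) (Y2.centre (\<sigma> i))}"
begin

lemma image_map_sum: "map_sum \<psi> id ` topspace Y1.Y = topspace Y2.Y"
proof -
  have "map_sum \<psi> id ` Inl ` topspace X = Inl ` \<psi> ` topspace X"
    by (simp add: image_image)
  also have "\<dots> = Inl ` topspace X"
    using bij_\<psi> by (simp add: bij_betw_def)
  finally have "map_sum \<psi> id ` Inl ` topspace X = Inl ` topspace X" .
  moreover have "map_sum \<psi> id ` Inr ` M = Inr ` M"
    by (simp add: image_image)
  ultimately show ?thesis
    unfolding Y1.topspace_Y Y2.topspace_Y image_Un by (rule arg_cong2[where f="(\<union>)"])
qed

lemma inj_on_map_sum: "inj_on (map_sum \<psi> id) (topspace Y1.Y)"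
proof (rule inj_onI)
  fix u v
  assume u: "u \<in> topspace Y1.Y" and v: "v \<in> topspace Y1.Y"
    and eq: "map_sum \<psi> id u = map_sum \<psi> id v"
  have "inj_on \<psi> (topspace X)" using bij_\<psi> by (simp add: bij_betw_def)
  then show "u = v"
    using u v eq unfolding Y1.topspace_Y by (cases u; cases v) (auto dest: inj_onD)
qed

lemma matched_blocks_inside:
  assumes p: "p \<in> M" and V: "openin Y2.Y V" "Inr p \<in> V"
  obtains U F where "openin Y1.Y U" "Inr p \<in> U" "finite F"
    "\<And>i. i \<notin> F \<Longrightarrow> Y1.block i \<inter> U \<noteq> {} \<Longrightarrow> Y2.block (\<sigma> i) \<subseteq> V"
proof -
  obtain \<delta> F' where \<delta>: "0 < \<delta>" "finite F'"
    and inside: "\<And>j. j \<notin> F' \<Longrightarrow> d (Y2.centre j) p < \<delta> \<Longrightarrow> Y2.block j \<subseteq> V"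
    using Y2.centres_near_have_blocks_inside[OF p V] by blast
  obtain U F where U: "openin Y1.Y U" "Inr p \<in> U" "finite F"
    and near: "\<And>i. i \<notin> F \<Longrightarrow> Y1.block i \<inter> U \<noteq> {} \<Longrightarrow> d (Y1.centre i) p < \<delta> / 2"
    using Y1.blocks_near_have_centres_near[OF p] \<delta>(1) by (metis half_gt_zero)
  let ?F = "F \<union> \<sigma> -` F' \<union> {i. \<delta> / 2 \<le> d (Y1.centre i) (Y2.centre (\<sigma> i))}"
  have fin: "finite ?F"
    using U(3) \<delta> centres_match[of "\<delta> / 2"] finite_vimageI[OF \<delta>(2) inj_\<sigma>] by simp
  have matched: "Y2.block (\<sigma> i) \<subseteq> V" if i: "i \<notin> ?F" "Y1.block i \<inter> U \<noteq> {}" for i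
  proof (rule inside)
    show "\<sigma> i \<notin> F'" using i(1) by simp
    have "d (Y2.centre (\<sigma> i)) p \<le> d (Y1.centre i) (Y2.centre (\<sigma> i)) + d (Y1.centre i) p"
      using Y1.triangle'' Y1.centre_in_M Y2.centre_in_M p by blast
    then show "d (Y2.centre (\<sigma> i)) p < \<delta>"
      using near[of i] i by fastforce
  qed
  from that[OF U(1,2) fin matched] show ?thesis .
qed

lemma topcontinuous_at_Inl:
  assumes x: "x \<in> topspace X"
  shows "topcontinuous_at Y1.Y Y2.Y (map_sum \<psi> id) (Inl x)"
  unfolding topcontinuous_at_def
proof (intro conjI allI impI)
  show "Inl x \<in> topspace Y1.Y" using x Y1.topspace_Y by blast
  show "map_sum \<psi> id \<in> topspace Y1.Y \<rightarrow> topspace Y2.Y" using image_map_sum by blast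
  fix V assume V: "openin Y2.Y V \<and> map_sum \<psi> id (Inl x) \<in> V"
  have "continuous_map X Y2.Y (Inl \<circ> \<psi>)"
    using continuous_map_compose[OF continuous_\<psi> continuous_map_glue_Inl[OF Y2.admissible]] .
  then have "openin X {y \<in> topspace X. Inl (\<psi> y) \<in> V}"
    using V unfolding continuous_map_def by auto
  then have "openin Y1.Y (Inl ` {y \<in> topspace X. Inl (\<psi> y) \<in> V})"
    by (rule openin_glue_Inl[OF Y1.admissible])
  moreover have "Inl x \<in> Inl ` {y \<in> topspace X. Inl (\<psi> y) \<in> V}"
    using x V by simp
  ultimately show "\<exists>U. openin Y1.Y U \<and> Inl x \<in> U \<and> (\<forall>u\<in>U. map_sum \<psi> id u \<in> V)"
    by (intro exI[of _ "Inl ` {y \<in> topspace X. Inl (\<psi> y) \<in> V}"]) auto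
qed

lemma topcontinuous_at_Inr:
  assumes p: "p \<in> M"
  shows "topcontinuous_at Y1.Y Y2.Y (map_sum \<psi> id) (Inr p)"
  unfolding topcontinuous_at_def
proof (intro conjI allI impI)
  show "Inr p \<in> topspace Y1.Y" using p Y1.topspace_Y by blast
  show "map_sum \<psi> id \<in> topspace Y1.Y \<rightarrow> topspace Y2.Y" using image_map_sum by blast
  fix V assume "openin Y2.Y V \<and> map_sum \<psi> id (Inr p) \<in> V"
  then have V: "openin Y2.Y V" "Inr p \<in> V" by simp_all
  obtain U F where U: "openin Y1.Y U" "Inr p \<in> U" "finite F"
    and inside: "\<And>i. i \<notin> F \<Longrightarrow> Y1.block i \<inter> U \<noteq> {} \<Longrightarrow> Y2.block (\<sigma> i) \<subseteq> V"
    using matched_blocks_inside[OF p V] by blast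
  obtain r where r: "0 < r" "Inr ` Y1.mball p r \<subseteq> V"
    using Y2.mball_Inr_subset_nbhd[OF p V] by blast
  define W where "W = U - Inr ` (M - Y1.mball p r) - (\<Union>i\<in>F. Y1.block i)"
  have "openin Y1.Y W"
    unfolding W_def using U(1,3) closedin_diff[OF closedin_topspace Y1.openin_mball]
    by (intro openin_diff Y1.closedin_Inr Y1.closedin_Union_blocks) (auto simp: Y1.Z_eq)
  moreover have "Inr p \<in> W"
    unfolding W_def using U(2) p r(1) by auto
  moreover have "map_sum \<psi> id w \<in> V" if w: "w \<in> W" for w
  proof -
    have "w \<in> topspace Y1.Y" using w U(1) openin_subset unfolding W_def by blast
    then consider x i where "w = Inl x" "x \<in> C i" | z where "w = Inr z" "z \<in> M"
      unfolding Y1.topspace_Y using Y1.C_cover by blast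
    then show ?thesis
    proof cases
      case 1
      then have "i \<notin> F" "Y1.block i \<inter> U \<noteq> {}" using w unfolding W_def by blast+
      then show ?thesis using inside 1 \<psi>_block by fastforce
    next
      case 2
      then have "z \<in> Y1.mball p r" using w unfolding W_def by blast
      then show ?thesis using r(2) 2(1) by auto
    qed
  qed
  ultimately show "\<exists>W. openin Y1.Y W \<and> Inr p \<in> W \<and> (\<forall>w\<in>W. map_sum \<psi> id w \<in> V)"
    by blast
qed

lemma homeomorphic_glue: "Y1.Y homeomorphic_space Y2.Y"
proof -
  have "continuous_map Y1.Y Y2.Y (map_sum \<psi> id)"
    unfolding continuous_map_eq_topcontinuous_at Y1.topspace_Y
    using topcontinuous_at_Inl topcontinuous_at_Inr by blast
  then have "homeomorphic_map Y1.Y Y2.Y (map_sum \<psi> id)"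
    using continuous_imp_homeomorphic_map Y1.compact_Y Y2.Hausdorff_Y image_map_sum inj_on_map_sum
    by blast
  then show ?thesis by (rule homeomorphic_map_imp_homeomorphic_space)
qed

end

context block_compactification_pair
begin

lemma homeomorphic_glue_of_homeomorphic_blocks:
  fixes K :: "'c topology" and \<eta> \<eta>' :: "nat \<Rightarrow> 'c \<Rightarrow> 'a"
  assumes "\<And>i. homeomorphic_map K (subtopology X (C i)) (\<eta> i)"
    and "\<And>i. homeomorphic_map K (subtopology X (C' i)) (\<eta>' i)"
  shows "Y1.Y homeomorphic_space Y2.Y"
proof -
  obtain \<sigma> where \<sigma>: "bij \<sigma>" "\<And>t. 0 < t \<Longrightarrow> finite {i. t \<le> d (Y1.centre i) (Y2.centre (\<sigma> i))}"
    using centres_matching by metis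
  obtain \<psi> where "continuous_map X X \<psi>" "bij_betw \<psi> (topspace X) (topspace X)"
    "\<And>i x. x \<in> C i \<Longrightarrow> \<psi> x \<in> C' (\<sigma> i)"
    using block_permuting_map[OF Y1.decomp Y2.decomp assms \<sigma>(1)] by blast
  then interpret matched_block_compactifications M d X Z f g C C' \<psi> \<sigma>
    using \<sigma> by unfold_locales (auto simp: bij_is_inj)
  show ?thesis by (rule homeomorphic_glue)
qed

end

theorem mainTheorem7:
  fixes K :: "'c topology" and X :: "'a topology" and Z :: "'b topology"
    and C C' :: "nat \<Rightarrow> 'a set" and \<eta> \<eta>' :: "nat \<Rightarrow> 'c \<Rightarrow> 'a"
    and f g :: "'a set \<Rightarrow> 'b set"
  assumes "compact_space K" and "Hausdorff_space K"
    and "is_coproduct_decomp X C" and "is_coproduct_decomp X C'"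
    and "\<And>i. homeomorphic_map K (subtopology X (C i)) (\<eta> i)"
    and "\<And>i. homeomorphic_map K (subtopology X (C' i)) (\<eta>' i)"
    and "compact_space Z" and "metrizable_space Z"
    and "in_Pers (decomp_coarse X C) X Z f"
    and "in_Pers (decomp_coarse X C') X Z g"
  shows "glue X Z f homeomorphic_space glue X Z g"
proof (cases "topspace K = {}")
  case True
  then have "C i = {}" for i
    using homeomorphic_imp_surjective_map[OF assms(5)[of i]] is_coproduct_decompD(2)[OF assms(3)]
    by auto
  then have "topspace X = {}"
    using is_coproduct_decompD(3)[OF assms(3)] by auto
  then show ?thesis
    using homeomorphic_glue_of_empty assms(9,10) unfolding in_Pers_def by blast
next
  case False
  obtain M d where Md: "Metric_space M d" "Z = Metric_space.mtopology M d"
    using assms(8) unfolding metrizable_space_def by blast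
  have "block_compactification_pair M d X Z f g C C'"
    unfolding block_compactification_pair_def
    using block_compactification_of_homeomorphic_blocks[OF Md assms(1) False] assms(3-6,9,10) by blast
  then show ?thesis
    by (rule block_compactification_pair.homeomorphic_glue_of_homeomorphic_blocks[OF _ assms(5,6)])
qed

end
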